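(* The functions $S=\sin^2\phi$, $C=\cos^2\phi$ and $D=\cos^2\psi$ are not elliptic; that is, none of them admits an extension from a small disc about $0$ to an elliptic (doubly periodic meromorphic) function on $\mathbb{C}$.
   Context: Let $0<\kappa<1$ and $\lambda=\sqrt{1-\kappa^2}\in(0,1)$. Let $F(\tfrac16,\tfrac56;\tfrac12;\cdot)$ denote the Gauss hypergeometric function. Define $u$ as a function of $\phi$ near $0$ by $u=\int_0^{\sin\phi}F(\tfrac16,\tfrac56;\tfrac12;\kappa^2t^2)\,\frac{dt}{\sqrt{1-t^2}}$; near the origin (fixing $0$) this inverts to a holomorphic function $u\mapsto\phi(u)$ with $\phi(0)=0$. Let $\psi$ be the holomorphic function near $0$ with $\psi(0)=0$ and $\sin\psi=\kappa\sin\phi$. All functions are regarded as functions of $u$ on a small disc about $0$. *)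

theory Defs
  imports "HOL-Complex_Analysis.Complex_Analysis"
begin

text \<open>Gauss hypergeometric series F(a,b;c;z) (as a power series; converges for norm z < 1).\<close>
definition gauss_F :: "complex \<Rightarrow> complex \<Rightarrow> complex \<Rightarrow> complex \<Rightarrow> complex" where
  "gauss_F a b c z = (\<Sum>n. (pochhammer a n * pochhammer b n / (pochhammer c n * fact n)) * z ^ n)"

definition u_of_phi :: "real \<Rightarrow> complex \<Rightarrow> complex" where
  "u_of_phi \<kappa> \<phi> = contour_integral (linepath 0 (sin \<phi>))
     (\<lambda>t. gauss_F (1/6) (5/6) (1/2) ((complex_of_real \<kappa>)\<^sup>2 * t\<^sup>2) / csqrt (1 - t\<^sup>2))"

definition elliptic :: "(complex \<Rightarrow> complex) \<Rightarrow> bool" where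
  "elliptic f \<longleftrightarrow> f meromorphic_on UNIV \<and>
     (\<exists>\<omega>1 \<omega>2. \<omega>1 \<noteq> 0 \<and> \<omega>2 \<noteq> 0 \<and> Im (\<omega>2 / \<omega>1) \<noteq> 0 \<and>
        (\<forall>z. f (z + \<omega>1) = f z) \<and> (\<forall>z. f (z + \<omega>2) = f z))"

end

theory Submission
  imports Defs
begin

text \<open>Write S = sin^2 \<phi> and K = \<kappa>^2. The integrand of u is evaluated in closed form:
  F(1/6, 5/6; 1/2; y) = w(y) / sqrt(1 - y), where w is the branch of the Chebyshev relation
  4 w^3 - 3 w = 1 - 2 y with w(0) = 1 (both sides solve the same hypergeometric equation).
  Differentiating u(\<phi>) then shows that q = w(K S), which is cos(2\<psi>/3), satisfies
  q^2 S'^2 = 4 S (1 - S) (1 - K S); hence q is a rational function of S and S', and it solves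
  9 q^2 q'^2 = 2 (1 - q^2) (4 q^3 - 3 q + 2 K - 1).
  If S extended to an elliptic function, so would q. A nonconstant elliptic function has a zero,
  but near a zero of q the equation forces q to vanish identically. Finally cos^2 \<phi> = 1 - S and
  cos^2 \<psi> = 1 - K S are affine in S.\<close>

section \<open>Doubly periodic functions\<close>

lemma periodic_of_int_multiple:
  fixes f :: "complex \<Rightarrow> 'a"
  assumes periodic: "\<And>z. f (z + \<omega>) = f z"
  shows "f (z + of_int m * \<omega>) = f z"
proof -
  have nat: "f (z + of_nat n * \<omega>) = f z" for n z
  proof (induction n)
    case (Suc n)
    have "f (z + of_nat (Suc n) * \<omega>) = f ((z + of_nat n * \<omega>) + \<omega>)"
      by (simp add: algebra_simps)
    with Suc periodic show ?case by simp
  qed simp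
  show ?thesis
  proof (cases m rule: int_cases)
    case (neg n)
    hence m: "of_int m = - (of_nat (Suc n) :: complex)" by simp
    have "f (z + of_int m * \<omega>) = f ((z + of_int m * \<omega>) + of_nat (Suc n) * \<omega>)"
      by (rule nat[symmetric])
    also have "(z + of_int m * \<omega>) + of_nat (Suc n) * \<omega> = z"
      unfolding m by (simp add: algebra_simps)
    finally show ?thesis .
  qed (simp add: nat)
qed

text \<open>Every point is congruent modulo the lattice to a point of the fundamental parallelogram,
  which lies in a compact disc.\<close>
lemma doubly_periodic_continuous_imp_bounded:
  fixes f :: "complex \<Rightarrow> complex"
  assumes "continuous_on UNIV f" and "\<omega>1 \<noteq> 0" and "Im (\<omega>2 / \<omega>1) \<noteq> 0"
    and periodic1: "\<And>z. f (z + \<omega>1) = f z" and periodic2: "\<And>z. f (z + \<omega>2) = f z"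
  shows "bounded (range f)"
proof -
  define K where "K = cball (0::complex) (norm \<omega>1 + norm \<omega>2)"
  have "f z \<in> f ` K" for z
  proof -
    define \<tau> where "\<tau> = \<omega>2 / \<omega>1"
    define \<zeta> where "\<zeta> = z / \<omega>1"
    define b where "b = Im \<zeta> / Im \<tau>"
    define a where "a = Re \<zeta> - b * Re \<tau>"
    have "\<zeta> = of_real a + of_real b * \<tau>"
      using assms(3) unfolding \<tau>_def[symmetric]
      by (intro complex_eqI) (simp_all add: a_def b_def)
    hence z: "z = of_real a * \<omega>1 + of_real b * \<omega>2"
      using assms(2) unfolding \<tau>_def \<zeta>_def by (simp add: field_simps)
    define z' where "z' = of_real (frac a) * \<omega>1 + of_real (frac b) * \<omega>2"
    have "norm z' \<le> frac a * norm \<omega>1 + frac b * norm \<omega>2"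
      unfolding z'_def
      using norm_triangle_ineq[of "of_real (frac a) * \<omega>1" "of_real (frac b) * \<omega>2"]
      by (simp add: norm_mult frac_ge_0)
    also have "\<dots> \<le> norm \<omega>1 + norm \<omega>2"
      by (intro add_mono mult_left_le_one_le) (auto simp: frac_ge_0 frac_lt_1 less_imp_le)
    finally have "z' \<in> K" unfolding K_def by simp
    moreover have "z = (z' + of_int \<lfloor>a\<rfloor> * \<omega>1) + of_int \<lfloor>b\<rfloor> * \<omega>2"
      unfolding z z'_def frac_def by (simp add: algebra_simps)
    hence "f z = f z'"
      using periodic_of_int_multiple[of f, OF periodic1] periodic_of_int_multiple[of f, OF periodic2]
      by metis
    ultimately show ?thesis by blast
  qed
  hence "range f \<subseteq> f ` K" by blast
  moreover have "compact (f ` K)"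
    using assms(1) unfolding K_def by (intro compact_continuous_image) (auto intro: continuous_on_subset)
  ultimately show ?thesis using compact_imp_bounded bounded_subset by blast
qed

lemma remove_sings_periodic:
  assumes "\<And>z. f (z + \<omega>) = f z"
  shows "remove_sings f (z + \<omega>) = remove_sings f z"
proof -
  have "remove_sings f (z + \<omega>) = remove_sings (\<lambda>w. f (z + \<omega> + w)) 0"
    by (rule remove_sings_shift_0)
  also have "(\<lambda>w. f (z + \<omega> + w)) = (\<lambda>w. f (z + w))"
    using assms[of "z + _"] by (simp add: add_ac)
  also have "remove_sings \<dots> 0 = remove_sings f z"
    by (rule remove_sings_shift_0[symmetric])
  finally show ?thesis .
qed

lemma deriv_periodic:
  fixes f :: "complex \<Rightarrow> complex"
  assumes "\<And>z. f (z + \<omega>) = f z"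
  shows "deriv f (z + \<omega>) = deriv f z"
proof -
  have "(\<lambda>x. f (x + \<omega>)) = f" using assms by auto
  hence "(f has_field_derivative D) (at (z + \<omega>)) \<longleftrightarrow> (f has_field_derivative D) (at z)" for D
    using DERIV_shift[of f D z \<omega>] by simp
  thus ?thesis unfolding deriv_def by simp
qed

lemma doubly_periodic_entire_imp_constant:
  fixes f :: "complex \<Rightarrow> complex"
  assumes "f holomorphic_on UNIV" and "\<omega>1 \<noteq> 0" and "Im (\<omega>2 / \<omega>1) \<noteq> 0"
    and "\<And>z. f (z + \<omega>1) = f z" and "\<And>z. f (z + \<omega>2) = f z"
  shows "f constant_on UNIV"
proof -
  have "bounded (range f)"
    using assms by (intro doubly_periodic_continuous_imp_bounded holomorphic_on_imp_continuous_on)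
  with assms(1) show ?thesis by (rule Liouville_theorem)
qed

text \<open>A zero-free doubly periodic function has an entire doubly periodic reciprocal.\<close>
lemma nicely_meromorphic_doubly_periodic_zero_or_constant:
  fixes f :: "complex \<Rightarrow> complex"
  assumes f: "f nicely_meromorphic_on UNIV" and "\<omega>1 \<noteq> 0" and "Im (\<omega>2 / \<omega>1) \<noteq> 0"
    and periodic1: "\<And>z. f (z + \<omega>1) = f z" and periodic2: "\<And>z. f (z + \<omega>2) = f z"
  obtains z where "f analytic_on {z}" "f z = 0"
    | c where "\<And>z. f analytic_on {z} \<Longrightarrow> f z = c"
proof (cases "\<exists>z. f analytic_on {z} \<and> f z = 0")
  case False
  define P where "P = remove_sings (\<lambda>z. inverse (f z))"
  have "P analytic_on {z}" for z
  proof -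
    have "(\<lambda>z. inverse (f z)) meromorphic_on UNIV"
      using f by (intro meromorphic_intros) (simp add: nicely_meromorphic_on_def)
    hence iso: "isolated_singularity_at (\<lambda>z. inverse (f z)) z"
      using meromorphic_on_isolated_singularity meromorphic_on_subset by blast
    have "\<exists>c. (\<lambda>z. inverse (f z)) \<midarrow>z\<rightarrow> c"
    proof (cases "is_pole f z")
      case True
      hence "(\<lambda>z. inverse (f z)) \<midarrow>z\<rightarrow> 0"
        unfolding is_pole_def using filterlim_compose[OF tendsto_inverse_0] by blast
      thus ?thesis by blast
    next
      case False
      hence "f analytic_on {z}" using nicely_meromorphic_on_imp_analytic_at[OF f] by blast
      hence "f \<midarrow>z\<rightarrow> f z" and "f z \<noteq> 0"
        using \<open>\<not> (\<exists>z. f analytic_on {z} \<and> f z = 0)\<close> analytic_at_imp_isCont isContD by blast+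
      thus ?thesis by (blast intro: tendsto_intros)
    qed
    thus ?thesis unfolding P_def using iso remove_sings_analytic_at by blast
  qed
  hence "P holomorphic_on UNIV"
    using analytic_imp_holomorphic analytic_on_analytic_at by blast
  hence "P constant_on UNIV"
    by (rule doubly_periodic_entire_imp_constant[OF _ assms(2,3)])
      (simp_all add: P_def periodic1 periodic2 remove_sings_periodic)
  then obtain c where c: "\<And>z. P z = c" unfolding constant_on_def by blast
  have "f z = inverse c" if "f analytic_on {z}" for z
  proof -
    have "f z \<noteq> 0" using False that by blast
    hence "P z = inverse (f z)"
      unfolding P_def using that by (intro remove_sings_at_analytic analytic_intros) auto
    thus ?thesis using c[of z] by (simp add: inverse_eq_iff_eq)
  qed
  thus ?thesis using that(2) by blast
qed (use that in blast)

lemma meromorphic_on_UNIV_eq_0_imp_eq_0: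
  assumes "f meromorphic_on UNIV" and "open U" "u \<in> U" and "\<And>u. u \<in> U \<Longrightarrow> f u = 0"
    and "f analytic_on {z}"
  shows "f z = 0"
proof -
  have nice: "remove_sings f nicely_meromorphic_on UNIV"
    using assms(1) by (rule remove_sings_nicely_meromorphic)
  have "eventually (\<lambda>v. v \<in> U) (at u)" using assms(2,3) by (rule eventually_at_in_open')
  hence "eventually (\<lambda>v. remove_sings f v = 0) (at u)"
  proof eventually_elim
    case (elim v)
    have "eventually (\<lambda>w. f w = 0) (at v)"
      using eventually_at_in_open'[OF assms(2) elim] by eventually_elim (use assms(4) in auto)
    hence "f \<midarrow>v\<rightarrow> 0" by (simp add: tendsto_eventually)
    thus ?case by (rule remove_sings_eqI)
  qed
  hence "frequently (\<lambda>v. remove_sings f v = 0) (at u)"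
    by (rule eventually_frequently[rotated]) simp
  hence "remove_sings f z = 0"
    using frequently_eq_meromorphic_imp_constant[OF _ nice] by blast
  with assms(5) show ?thesis by simp
qed

text \<open>If 2 K \<noteq> 1 the equation fails at a zero of Q; if 2 K = 1 it reads Q D = 0 near that
  zero, where D = 6.\<close>
lemma ode_zero_imp_eventually_zero:
  fixes Q :: "complex \<Rightarrow> complex" and K :: complex
  assumes "Q holomorphic_on N" "open N" "z \<in> N" "Q z = 0"
    and ode: "\<And>u. u \<in> N \<Longrightarrow>
      9 * (Q u)^2 * (deriv Q u)^2 = 2 * (1 - (Q u)^2) * (4 * (Q u)^3 - 3 * Q u + 2 * K - 1)"
  shows "eventually (\<lambda>u. Q u = 0) (at z)"
proof -
  have K: "K = 1 / 2" using ode[OF assms(3)] assms(4) by (simp add: field_simps)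
  define D where "D = (\<lambda>u. 9 * Q u * (deriv Q u)^2 - 2 * (1 - (Q u)^2) * (4 * (Q u)^2 - 3))"
  have QD: "Q u * D u = 0" if "u \<in> N" for u
  proof -
    have "Q u * D u = 9 * (Q u)^2 * (deriv Q u)^2 - 2 * (1 - (Q u)^2) * (4 * (Q u)^3 - 3 * Q u + 2 * K - 1)"
      unfolding D_def by (simp add: K algebra_simps power2_eq_square power3_eq_cube)
    with ode[OF that] show ?thesis by simp
  qed
  have "D holomorphic_on N"
    unfolding D_def using assms(1,2) by (intro holomorphic_intros holomorphic_deriv)
  hence "D \<midarrow>z\<rightarrow> D z"
    using assms(2,3) by (meson holomorphic_on_imp_continuous_on continuous_on_eq_continuous_at isContD)
  moreover have "D z = 6" unfolding D_def using assms(4) by simp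
  ultimately have "eventually (\<lambda>u. D u \<noteq> 0) (at z)"
    using tendsto_imp_eventually_ne[of D 6 "at z" 0] by simp
  moreover have "eventually (\<lambda>u. u \<in> N) (at z)" using assms(2,3) by (rule eventually_at_in_open')
  ultimately show ?thesis by eventually_elim (use QD in auto)
qed

text \<open>A nonconstant elliptic function takes the value 0, where the equation forces it to vanish
  identically.\<close>
lemma doubly_periodic_ode_solution_constant:
  fixes f :: "complex \<Rightarrow> complex" and K :: complex
  assumes f: "f nicely_meromorphic_on UNIV" and "\<omega>1 \<noteq> 0" and "Im (\<omega>2 / \<omega>1) \<noteq> 0"
    and "\<And>z. f (z + \<omega>1) = f z" and "\<And>z. f (z + \<omega>2) = f z"
    and U: "open U" "a \<in> U" "f holomorphic_on U"
    and ode: "\<And>u. u \<in> U \<Longrightarrow>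
      9 * (f u)^2 * (deriv f u)^2 = 2 * (1 - (f u)^2) * (4 * (f u)^3 - 3 * f u + 2 * K - 1)"
  shows "f constant_on U"
  using nicely_meromorphic_doubly_periodic_zero_or_constant[OF assms(1-5)]
proof cases
  case (1 z)
  then obtain N where N: "open N" "z \<in> N" "f holomorphic_on N" using analytic_at by blast
  define E where "E = (\<lambda>u. 9 * (f u)^2 * (deriv f u)^2 - 2 * (1 - (f u)^2) * (4 * (f u)^3 - 3 * f u + 2 * K - 1))"
  have "f meromorphic_on UNIV" using f unfolding nicely_meromorphic_on_def by blast
  hence mero: "E meromorphic_on UNIV" unfolding E_def by (intro meromorphic_intros)
  have hol: "E holomorphic_on N"
    unfolding E_def using N by (intro holomorphic_intros holomorphic_deriv)
  have "E v = 0" if "v \<in> N" for v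
  proof (rule meromorphic_on_UNIV_eq_0_imp_eq_0[OF mero U(1,2)])
    show "E u = 0" if "u \<in> U" for u using ode[OF that] by (simp add: E_def)
    show "E analytic_on {v}" using hol N(1) that analytic_at by blast
  qed
  hence "eventually (\<lambda>u. f u = 0) (at z)"
    using N 1(2) by (intro ode_zero_imp_eventually_zero[of f N]) (auto simp: E_def)
  hence "frequently (\<lambda>u. f u = 0) (at z)" by (rule eventually_frequently[rotated]) simp
  hence "f w = 0" for w using frequently_eq_meromorphic_imp_constant[OF _ f] by blast
  thus ?thesis by (simp add: constant_on_def)
next
  case (2 c)
  have "f u = c" if "u \<in> U" for u using 2 U that analytic_at by blast
  thus ?thesis by (auto simp: constant_on_def)
qed

section \<open>The hypergeometric function F(1/6, 5/6; 1/2)\<close>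

lemma hypergeometric_fps_ode_recurrence:
  fixes F :: "complex fps" and a b c :: complex
  assumes "fps_X * (1 - fps_X) * fps_deriv (fps_deriv F)
      + (fps_const c - fps_const (a + b + 1) * fps_X) * fps_deriv F - fps_const (a * b) * F = 0"
  shows "(of_nat n + 1) * (of_nat n + c) * F $ Suc n = (of_nat n + a) * (of_nat n + b) * F $ n"
proof -
  let ?L = "fps_X * (1 - fps_X) * fps_deriv (fps_deriv F)
      + (fps_const c - fps_const (a + b + 1) * fps_X) * fps_deriv F - fps_const (a * b) * F"
  have "?L $ n = (of_nat n + 1) * (of_nat n + c) * F $ Suc n - (of_nat n + a) * (of_nat n + b) * F $ n"
    by (cases n) (simp_all add: algebra_simps)
  with assms show ?thesis by simp
qed

lemma hypergeometric_fps_ode_coefficients: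
  fixes F :: "complex fps" and a b c :: complex
  assumes c: "\<And>k. c \<noteq> - of_nat k"
    and ode: "fps_X * (1 - fps_X) * fps_deriv (fps_deriv F)
      + (fps_const c - fps_const (a + b + 1) * fps_X) * fps_deriv F - fps_const (a * b) * F = 0"
  shows "F $ n = F $ 0 * (pochhammer a n * pochhammer b n / (pochhammer c n * fact n))"
proof (induction n)
  case (Suc n)
  have "of_nat n + c \<noteq> 0" using c[of n] by (auto simp: add_eq_0_iff)
  moreover have "pochhammer c n \<noteq> 0" using c by (auto simp: pochhammer_eq_0_iff)
  moreover have "(of_nat n + 1 :: complex) \<noteq> 0" by (metis of_nat_Suc of_nat_eq_0_iff add.commute Suc_neq_Zero)
  ultimately have "F $ Suc n = (of_nat n + a) * (of_nat n + b) * F $ n / ((of_nat n + 1) * (of_nat n + c))"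
    using hypergeometric_fps_ode_recurrence[OF ode, of n] by (simp add: eq_divide_eq mult.commute)
  thus ?case
    unfolding Suc.IH using \<open>pochhammer c n \<noteq> 0\<close> by (simp add: pochhammer_Suc field_simps)
qed simp

lemma gauss_F_eq_hypergeometric_ode_solution:
  fixes G :: "complex \<Rightarrow> complex" and a b c :: complex
  assumes G: "G holomorphic_on A" "open A" "0 \<in> A" "G 0 = 1"
    and c: "\<And>k. c \<noteq> - of_nat k"
    and ode: "\<And>y. y \<in> A \<Longrightarrow>
      y * (1 - y) * deriv (deriv G) y + (c - (a + b + 1) * y) * deriv G y - a * b * G y = 0"
  shows "eventually (\<lambda>y. gauss_F a b c y = G y) (nhds 0)"
proof -
  define F where "F = fps_expansion G 0"
  have F: "G has_fps_expansion F" unfolding F_def using G(2,3,1) by (rule has_fps_expansion_fps_expansion)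
  have "(\<lambda>y. y * (1 - y) * deriv (deriv G) y + (c - (a + b + 1) * y) * deriv G y - a * b * G y)
    has_fps_expansion (fps_X * (1 - fps_X) * fps_deriv (fps_deriv F)
      + (fps_const c - fps_const (a + b + 1) * fps_X) * fps_deriv F - fps_const (a * b) * F)"
    using F by (intro fps_expansion_intros)
  moreover have "(\<lambda>y. y * (1 - y) * deriv (deriv G) y + (c - (a + b + 1) * y) * deriv G y - a * b * G y)
    has_fps_expansion 0"
    unfolding has_fps_expansion_0_iff using eventually_nhds_in_open[OF G(2,3)]
    by eventually_elim (rule ode)
  ultimately have ode_F: "fps_X * (1 - fps_X) * fps_deriv (fps_deriv F)
      + (fps_const c - fps_const (a + b + 1) * fps_X) * fps_deriv F - fps_const (a * b) * F = 0"
    by (rule fps_expansion_unique_complex)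
  have "F $ 0 = 1" using fps_nth_fps_expansion[OF F, of 0] G(4) by simp
  hence "F $ n = pochhammer a n * pochhammer b n / (pochhammer c n * fact n)" for n
    using hypergeometric_fps_ode_coefficients[OF c ode_F, of n] by simp
  hence "gauss_F a b c y = eval_fps F y" for y
    unfolding gauss_F_def eval_fps_def by simp
  thus ?thesis using F unfolding has_fps_expansion_def by simp
qed

lemma near_one_four_square_ne:
  fixes w :: complex
  assumes "w \<in> ball 1 (1/10)"
  shows "4 * w^2 \<noteq> 1" and "4 * w^2 \<noteq> 3"
proof -
  have "norm (1 - w) < 1/10" using assms by (simp add: dist_norm)
  moreover have "1 - norm (1 - w) \<le> norm w" using norm_triangle_ineq2[of 1 "1 - w"] by simp
  ultimately have "9/10 < norm w" by simp
  hence "(9/10)^2 < norm w ^ 2" by (rule power_strict_mono) auto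
  hence "3 < norm (4 * w^2)" by (simp add: norm_mult norm_power power_divide)
  moreover have "norm (4 * w^2) \<le> 3" if "4 * w^2 = 1 \<or> 4 * w^2 = 3"
    using that by (metis norm_one norm_numeral one_le_numeral order_refl)
  ultimately show "4 * w^2 \<noteq> 1" and "4 * w^2 \<noteq> 3" by auto
qed

text \<open>For y = sin t ^ 2 this branch is w = cos (2 t / 3), since cos (3 s) = 4 cos s ^ 3 - 3 cos s.\<close>
lemma chebyshev_cubic_branch:
  obtains \<rho> w where "\<rho> > 0" "w holomorphic_on ball 0 \<rho>" "w 0 = 1"
    "\<And>y. y \<in> ball 0 \<rho> \<Longrightarrow> 4 * (w y)^3 - 3 * w y = 1 - 2 * y"
    "\<And>y. y \<in> ball 0 \<rho> \<Longrightarrow> w y \<in> ball 1 (1/10)"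
    "\<And>y. y \<in> ball 0 \<rho> \<Longrightarrow> (w has_field_derivative 2 / (3 - 12 * (w y)^2)) (at y)"
proof -
  define p :: "complex \<Rightarrow> complex" where "p = (\<lambda>v. (1 + 3 * v - 4 * v^3) / 2)"
  have dp: "(p has_field_derivative (3 - 12 * v^2) / 2) (at v)" for v
    unfolding p_def by (auto intro!: derivative_eq_intros simp: field_simps)
  have hol_p: "p holomorphic_on A" for A unfolding p_def by (intro holomorphic_intros) auto
  obtain r where r: "r > 0" "ball (1::complex) r \<subseteq> ball 1 (1/10)" "inj_on p (ball 1 r)"
    using has_complex_derivative_locally_injective[OF hol_p, of 1 "ball 1 (1/10)"]
      DERIV_imp_deriv[OF dp[of 1]] by auto
  obtain g where g: "g holomorphic_on p ` ball 1 r"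
    "\<And>v. v \<in> ball 1 r \<Longrightarrow> deriv p v * deriv g (p v) = 1"
    "\<And>v. v \<in> ball 1 r \<Longrightarrow> g (p v) = v"
    using holomorphic_has_inverse[OF hol_p _ r(3)] by auto
  have open_image: "open (p ` ball 1 r)" by (rule open_mapping_thm3[OF hol_p _ r(3)]) auto
  have "p 1 = 0" by (simp add: p_def)
  hence "0 \<in> p ` ball 1 r" using r(1) by (metis centre_in_ball image_eqI)
  then obtain \<rho> where \<rho>: "\<rho> > 0" "ball 0 \<rho> \<subseteq> p ` ball 1 r"
    using open_image openE by blast
  show ?thesis
  proof (rule that[of \<rho> g])
    show "g holomorphic_on ball 0 \<rho>" using g(1) \<rho>(2) holomorphic_on_subset by blast
    show "g 0 = 1" using g(3)[of 1] r(1) by (simp add: p_def)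
  next
    fix y :: complex assume y: "y \<in> ball 0 \<rho>"
    then obtain v where v: "v \<in> ball 1 r" "y = p v" using \<rho>(2) by blast
    hence gy: "g y = v" using g(3) by simp
    show "4 * (g y)^3 - 3 * g y = 1 - 2 * y" using v(2) unfolding gy by (simp add: p_def field_simps)
    show "g y \<in> ball 1 (1/10)" using v(1) r(2) unfolding gy by auto
    have "deriv p v * deriv g y = 1" using g(2)[OF v(1)] v(2) by simp
    moreover from this have "deriv p v \<noteq> 0" by auto
    ultimately have "deriv g y = 1 / deriv p v" by (simp add: eq_divide_eq mult.commute)
    hence "deriv g y = 2 / (3 - 12 * v^2)" using DERIV_imp_deriv[OF dp[of v]] by simp
    moreover have "(g has_field_derivative deriv g y) (at y)"
      using holomorphic_derivI[OF g(1) open_image] y \<rho>(2) by blast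
    ultimately show "(g has_field_derivative 2 / (3 - 12 * (g y)^2)) (at y)" unfolding gy by simp
  qed (use \<rho> in auto)
qed

lemma chebyshev_branch_ode_identity:
  fixes w s y :: complex
  assumes s: "s^2 = 1 - y" "s \<noteq> 0" and D: "3 - 12 * w^2 \<noteq> 0"
    and cubic: "4 * w^3 - 3 * w = 1 - 2 * y"
  shows "y * (1 - y) * ((96 * w / (3 - 12 * w^2)^3) / s + (2 / (3 - 12 * w^2)) / s^3 + 3 * w / (4 * s^5))
         + (1/2 - 2 * y) * ((2 / (3 - 12 * w^2)) / s + w / (2 * s^3)) - 5/36 * (w / s) = 0"
proof -
  define m where "m = 1 - y"
  define D where "D = 3 - 12 * w^2"
  have m: "m \<noteq> 0" using s unfolding m_def by auto
  have s3: "s^3 = s * m" and s5: "s^5 = s * m^2"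
    using s(1) unfolding m_def by (simp_all add: power2_eq_square eval_nat_numeral)
  have y: "y = 1 - m" unfolding m_def by simp
  have m_w: "2 * m = 1 - 3 * w + 4 * w^3" using cubic unfolding m_def by (simp add: algebra_simps)
  have "4 * w^2 - 1 \<noteq> 0" and "D \<noteq> 0" using D unfolding D_def by (auto simp: algebra_simps)
  have e1: "(1 - m) * m = (1 - w^2) * (4 * w^2 - 1)^2 / 4"
  proof -
    have "4 * ((1 - m) * m) = (2 - 2 * m) * (2 * m)" by (simp add: algebra_simps)
    also have "\<dots> = (1 - w^2) * (4 * w^2 - 1)^2" unfolding m_w by algebra
    finally show ?thesis by (simp add: eq_divide_eq mult.commute)
  qed
  have e2: "D = -3 * (4 * w^2 - 1)" unfolding D_def by simp
  have e3: "2 * m - 1 = w * (4 * w^2 - 3)"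
    using m_w by (simp add: algebra_simps power3_eq_cube power2_eq_square)
  have "y * (1 - y) * ((96 * w / D^3) / s + (2 / D) / s^3 + 3 * w / (4 * s^5))
         + (1/2 - 2 * y) * ((2 / D) / s + w / (2 * s^3)) - 5/36 * (w / s)
       = (1 / s) * ((1 - m) * m * (96 * w / D^3) + (2 * m - 1) / D + w / 9)"
    unfolding s3 s5 y using m s(2) \<open>D \<noteq> 0\<close> by (simp add: field_simps) algebra
  also have "(1 - m) * m * (96 * w / D^3) + (2 * m - 1) / D + w / 9 = 0"
    unfolding e1 e2 e3 using \<open>4 * w^2 - 1 \<noteq> 0\<close> by (simp add: field_simps) algebra
  finally show ?thesis unfolding D_def by simp
qed

lemma chebyshev_branch_hypergeometric_ode:
  fixes w :: "complex \<Rightarrow> complex"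
  assumes A: "open A" "y \<in> A"
    and dw: "\<And>y. y \<in> A \<Longrightarrow> (w has_field_derivative 2 / (3 - 12 * (w y)^2)) (at y)"
    and D: "\<And>y. y \<in> A \<Longrightarrow> 3 - 12 * (w y)^2 \<noteq> 0"
    and cubic: "4 * (w y)^3 - 3 * w y = 1 - 2 * y"
    and slit: "\<And>y. y \<in> A \<Longrightarrow> 1 - y \<notin> \<real>\<^sub>\<le>\<^sub>0"
  defines "G \<equiv> \<lambda>y. w y / csqrt (1 - y)"
  shows "y * (1 - y) * deriv (deriv G) y + (1/2 - 2 * y) * deriv G y - 5/36 * G y = 0"
proof -
  define s where "s = (\<lambda>y::complex. csqrt (1 - y))"
  define D where "D = (\<lambda>y. 3 - 12 * (w y)^2)"
  define G1 where "G1 = (\<lambda>y. (2 / D y) / s y + w y / (2 * s y ^ 3))"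
  define G2 where "G2 = (\<lambda>y. (96 * w y / D y ^ 3) / s y + (2 / D y) / s y ^ 3 + 3 * w y / (4 * s y ^ 5))"
  have G_s: "G = (\<lambda>y. w y / s y)" unfolding G_def s_def ..
  have s: "s y \<noteq> 0" if "y \<in> A" for y using slit[OF that] unfolding s_def by auto
  have ds: "(s has_field_derivative -1 / (2 * s y)) (at y)" if "y \<in> A" for y
    unfolding s_def by (rule derivative_eq_intros refl slit[OF that])+ simp
  have dD: "(D has_field_derivative -24 * w y * (2 / D y)) (at y)" if "y \<in> A" for y
    unfolding D_def by (rule derivative_eq_intros refl dw[OF that])+ (simp add: algebra_simps)
  have dG: "(G has_field_derivative G1 y) (at y)" if "y \<in> A" for y
  proof -
    have "(G has_field_derivative ((2 / D y) * s y - w y * (-1 / (2 * s y))) / (s y)^2) (at y)"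
      unfolding G_s D_def
      by (rule derivative_eq_intros dw[OF that] ds[OF that] refl s[OF that])+
        (simp add: power2_eq_square)
    also have "((2 / D y) * s y - w y * (-1 / (2 * s y))) / (s y)^2 = G1 y"
      using s[OF that] D[OF that]
      by (simp add: G1_def D_def field_simps power2_eq_square power3_eq_cube)
    finally show ?thesis .
  qed
  have dG1: "(G1 has_field_derivative G2 y) (at y)" if "y \<in> A" for y
  proof -
    have dw': "(w has_field_derivative 2 / D y) (at y)" using dw[OF that] by (simp add: D_def)
    have nz: "s y \<noteq> 0" "D y \<noteq> 0" using s[OF that] D[OF that] by (simp_all add: D_def)
    define E where "E = ((- (2 * (-24 * w y * (2 / D y))) / (D y)^2) * s y
        - (2 / D y) * (-1 / (2 * s y))) / (s y)^2
      + ((2 / D y) * (2 * s y ^ 3) - w y * (2 * (of_nat 3 * s y ^ 2 * (-1 / (2 * s y)))))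
        / (2 * s y ^ 3)^2"
    have "(G1 has_field_derivative E) (at y)"
      unfolding G1_def E_def
      by (rule derivative_eq_intros dw' ds[OF that] dD[OF that] refl nz)+
        (auto simp: power2_eq_square nz)
    also have "E = G2 y"
      unfolding G2_def E_def using nz
      by (simp add: field_simps power2_eq_square power3_eq_cube eval_nat_numeral)
    finally show ?thesis .
  qed
  have "deriv G y = G1 y" using dG[OF A(2)] by (rule DERIV_imp_deriv)
  moreover have "deriv (deriv G) y = G2 y"
  proof -
    have "eventually (\<lambda>x. deriv G x = G1 x) (nhds y)"
      using eventually_nhds_in_open[OF A] by eventually_elim (use dG DERIV_imp_deriv in blast)
    hence "deriv (deriv G) y = deriv G1 y" by (rule deriv_cong_ev) simp
    thus ?thesis using DERIV_imp_deriv[OF dG1[OF A(2)]] by simp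
  qed
  moreover have "(s y)^2 = 1 - y" unfolding s_def by simp
  ultimately show ?thesis
    using chebyshev_branch_ode_identity[OF _ s[OF A(2)] D[OF A(2)] cubic]
    unfolding G_def G1_def G2_def D_def s_def by simp
qed

lemma one_minus_notin_nonpos_Reals:
  fixes y :: complex
  assumes "norm y < 1"
  shows "1 - y \<notin> \<real>\<^sub>\<le>\<^sub>0"
  using complex_Re_le_cmod[of y] assms by (auto simp: complex_nonpos_Reals_iff)

lemma gauss_F_sixth_closed_form:
  obtains \<rho> w where "0 < \<rho>" "\<rho> \<le> 1/2" "w holomorphic_on ball 0 \<rho>" "w 0 = 1"
    "\<And>y. y \<in> ball 0 \<rho> \<Longrightarrow> 4 * (w y)^3 - 3 * w y = 1 - 2 * y"
    "\<And>y. y \<in> ball 0 \<rho> \<Longrightarrow> w y \<in> ball 1 (1/10)"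
    "\<And>y. y \<in> ball 0 \<rho> \<Longrightarrow> (w has_field_derivative 2 / (3 - 12 * (w y)^2)) (at y)"
    "\<And>y. y \<in> ball 0 \<rho> \<Longrightarrow> gauss_F (1/6) (5/6) (1/2) y = w y / csqrt (1 - y)"
proof -
  obtain \<rho>0 w where w: "\<rho>0 > 0" "w holomorphic_on ball 0 \<rho>0" "w 0 = 1"
    "\<And>y. y \<in> ball 0 \<rho>0 \<Longrightarrow> 4 * (w y)^3 - 3 * w y = 1 - 2 * y"
    "\<And>y. y \<in> ball 0 \<rho>0 \<Longrightarrow> w y \<in> ball 1 (1/10)"
    "\<And>y. y \<in> ball 0 \<rho>0 \<Longrightarrow> (w has_field_derivative 2 / (3 - 12 * (w y)^2)) (at y)"
    by (rule chebyshev_cubic_branch) blast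
  define \<rho>1 where "\<rho>1 = min \<rho>0 (1/2)"
  define G where "G = (\<lambda>y. w y / csqrt (1 - y))"
  have sub: "ball 0 \<rho>1 \<subseteq> ball 0 \<rho>0" unfolding \<rho>1_def by auto
  have slit: "1 - y \<notin> \<real>\<^sub>\<le>\<^sub>0" if "y \<in> ball 0 \<rho>1" for y :: complex
    using that by (intro one_minus_notin_nonpos_Reals) (auto simp: \<rho>1_def)
  have "G holomorphic_on ball 0 \<rho>1"
    unfolding G_def using holomorphic_on_subset[OF w(2) sub] slit
    by (intro holomorphic_intros) (auto simp: csqrt_eq_0 \<rho>1_def)
  moreover have "y * (1 - y) * deriv (deriv G) y + (1/2 - (1/6 + 5/6 + 1) * y) * deriv G y
      - 1/6 * (5/6) * G y = 0" if "y \<in> ball 0 \<rho>1" for y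
  proof -
    have "3 - 12 * (w y)^2 \<noteq> 0" if "y \<in> ball 0 \<rho>1" for y
      using near_one_four_square_ne(1)[OF w(5)] that by (auto simp: \<rho>1_def)
    hence "y * (1 - y) * deriv (deriv G) y + (1/2 - 2 * y) * deriv G y - 5/36 * G y = 0"
      unfolding G_def using that sub w(4,6) slit
      by (intro chebyshev_branch_hypergeometric_ode[of "ball 0 \<rho>1"]) (auto simp: \<rho>1_def)
    thus ?thesis by simp
  qed
  moreover have "(1/2 :: complex) \<noteq> - of_nat k" for k
    using arg_cong[where f = Re, of "1/2 :: complex" "- of_nat k"] by auto
  ultimately have "eventually (\<lambda>y. gauss_F (1/6) (5/6) (1/2) y = G y) (nhds 0)"
    using w(3) \<open>\<rho>0 > 0\<close>
    by (intro gauss_F_eq_hypergeometric_ode_solution[of G "ball 0 \<rho>1"]) (auto simp: G_def \<rho>1_def)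
  then obtain \<rho>2 where \<rho>2: "\<rho>2 > 0" "\<And>y. y \<in> ball 0 \<rho>2 \<Longrightarrow> gauss_F (1/6) (5/6) (1/2) y = G y"
    unfolding eventually_nhds_metric by (auto simp: dist_commute)
  show ?thesis
  proof (rule that[of "min \<rho>1 \<rho>2" w])
    have sub': "ball 0 (min \<rho>1 \<rho>2) \<subseteq> ball 0 \<rho>0" using sub by auto
    show "w holomorphic_on ball 0 (min \<rho>1 \<rho>2)" using holomorphic_on_subset[OF w(2) sub'] .
    fix y :: complex assume "y \<in> ball 0 (min \<rho>1 \<rho>2)"
    thus "4 * (w y)^3 - 3 * w y = 1 - 2 * y" "w y \<in> ball 1 (1/10)"
      "(w has_field_derivative 2 / (3 - 12 * (w y)^2)) (at y)"
      "gauss_F (1/6) (5/6) (1/2) y = w y / csqrt (1 - y)"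
      using w(4-6) \<rho>2(2) by (auto simp: G_def \<rho>1_def)
  qed (use w(1,3) \<rho>2(1) in \<open>auto simp: \<rho>1_def\<close>)
qed

section \<open>Inverting the integral u(\<phi>)\<close>

lemma linepath_integral_inverse_deriv:
  fixes h g :: "complex \<Rightarrow> complex"
  assumes h: "h holomorphic_on T" "open T" "convex T" "0 \<in> T"
    and g: "g holomorphic_on U" "open U" "g ` U \<subseteq> T"
    and inverse: "\<And>u. u \<in> U \<Longrightarrow> contour_integral (linepath 0 (g u)) h = u"
    and "u \<in> U"
  shows "h (g u) * deriv g u = 1"
proof -
  obtain P where P: "\<And>x. x \<in> T \<Longrightarrow> (P has_field_derivative h x) (at x within T)"
    using holomorphic_convex_primitive'[OF h(3,2,1)] by blast
  have integral: "contour_integral (linepath 0 s) h = P s - P 0" if "s \<in> T" for s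
  proof -
    have "closed_segment 0 s \<subseteq> T" using h(3,4) that by (simp add: closed_segment_subset)
    hence "(h has_contour_integral (P s - P 0)) (linepath 0 s)"
      using contour_integral_primitive[OF P, of "linepath 0 s"] by simp
    thus ?thesis by (rule contour_integral_unique)
  qed
  have PU: "P (g v) = v + P 0" if "v \<in> U" for v
    using inverse[OF that] integral[of "g v"] g(3) that by (auto simp: algebra_simps)
  have "((\<lambda>v. P (g v)) has_field_derivative h (g u) * deriv g u) (at u)"
  proof (rule DERIV_chain2[of P])
    show "(P has_field_derivative h (g u)) (at (g u))"
      using P[of "g u"] at_within_open[of "g u" T] g(3) \<open>u \<in> U\<close> h(2) by auto
    show "(g has_field_derivative deriv g u) (at u)"
      using holomorphic_derivI[OF g(1,2) \<open>u \<in> U\<close>] .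
  qed
  hence "((\<lambda>v. v + P 0) has_field_derivative h (g u) * deriv g u) (at u)"
    by (rule has_field_derivative_transform_within_open[OF _ g(2) \<open>u \<in> U\<close>]) (simp add: PU)
  moreover have "((\<lambda>v. v + P 0) has_field_derivative 1) (at u)"
    by (auto intro!: derivative_eq_intros)
  ultimately show ?thesis by (rule DERIV_unique)
qed

lemma eventually_sin_small_cos_pos:
  fixes f :: "'a \<Rightarrow> complex"
  assumes "(f \<longlongrightarrow> 0) F" and "0 < e"
  shows "eventually (\<lambda>x. norm (sin (f x)) < e \<and> Re (cos (f x)) > 0) F"
proof -
  have "((\<lambda>x. norm (sin (f x))) \<longlongrightarrow> 0) F"
    using tendsto_norm[OF isCont_tendsto_compose[OF isCont_sin assms(1)]] by simp
  moreover have "((\<lambda>x. Re (cos (f x))) \<longlongrightarrow> 1) F"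
    using tendsto_Re[OF isCont_tendsto_compose[OF isCont_cos assms(1)]] by simp
  ultimately have "eventually (\<lambda>x. norm (sin (f x)) < e) F" and "eventually (\<lambda>x. Re (cos (f x)) > 0) F"
    using assms(2) by (auto elim: order_tendstoD)
  thus ?thesis by (rule eventually_conj)
qed

lemma u_of_phi_derivative_identity:
  fixes \<kappa> r \<rho> :: real and \<phi> w :: "complex \<Rightarrow> complex"
  assumes \<kappa>: "0 < \<kappa>" "\<kappa> < 1" and "0 < r" and \<phi>: "\<phi> holomorphic_on ball 0 r" "\<phi> 0 = 0"
    and inverse: "\<And>u. u \<in> ball 0 r \<Longrightarrow> u_of_phi \<kappa> (\<phi> u) = u"
    and w: "0 < \<rho>" "\<rho> \<le> 1/2" "w holomorphic_on ball 0 \<rho>"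
      "\<And>y. y \<in> ball 0 \<rho> \<Longrightarrow> gauss_F (1/6) (5/6) (1/2) y = w y / csqrt (1 - y)"
  defines "K \<equiv> (complex_of_real \<kappa>)^2"
  obtains \<delta> where "0 < \<delta>" "\<delta> \<le> r"
    "\<And>u. u \<in> ball 0 \<delta> \<Longrightarrow> K * (sin (\<phi> u))^2 \<in> ball 0 \<rho>"
    "\<And>u. u \<in> ball 0 \<delta> \<Longrightarrow> cos (\<phi> u) \<noteq> 0"
    "\<And>u. u \<in> ball 0 \<delta> \<Longrightarrow> w (K * (sin (\<phi> u))^2) * deriv \<phi> u = csqrt (1 - K * (sin (\<phi> u))^2)"
proof -
  define T where "T = ball (0::complex) (sqrt \<rho>)"
  have "norm K < 1" using \<kappa> by (simp add: K_def norm_power power_less_one_iff)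
  have small: "norm (t^2) < \<rho>" "norm (K * t^2) < \<rho>" if "t \<in> T" for t
  proof -
    have "norm t ^ 2 < sqrt \<rho> ^ 2" using that by (intro power_strict_mono) (auto simp: T_def)
    thus "norm (t^2) < \<rho>" using w(1) by (simp add: norm_power)
    moreover have "norm K * norm (t^2) \<le> norm (t^2)"
      using \<open>norm K < 1\<close> by (intro mult_left_le_one_le) auto
    ultimately show "norm (K * t^2) < \<rho>" by (simp add: norm_mult)
  qed
  have slit: "1 - t^2 \<notin> \<real>\<^sub>\<le>\<^sub>0" "1 - K * t^2 \<notin> \<real>\<^sub>\<le>\<^sub>0" if "t \<in> T" for t
    using small[OF that] w(2) by (auto intro!: one_minus_notin_nonpos_Reals)
  have ne_1: "t^2 \<noteq> 1" "K * t^2 \<noteq> 1" if "t \<in> T" for t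
    using slit[OF that] by auto
  define h where "h = (\<lambda>t. gauss_F (1/6) (5/6) (1/2) (K * t^2) / csqrt (1 - t^2))"
  have h_eq: "h t = w (K * t^2) / csqrt (1 - K * t^2) / csqrt (1 - t^2)" if "t \<in> T" for t
    unfolding h_def using w(4) small(2)[OF that] by simp
  have "(\<lambda>t. w (K * t^2) / csqrt (1 - K * t^2) / csqrt (1 - t^2)) holomorphic_on T"
    using small slit
    by (intro holomorphic_intros holomorphic_on_compose_gen[OF _ w(3), unfolded o_def])
      (auto simp: csqrt_eq_0 ne_1)
  hence hol_h: "h holomorphic_on T" by (rule holomorphic_transform) (use h_eq in auto)
  have "continuous_on (ball 0 r) \<phi>" using \<phi>(1) holomorphic_on_imp_continuous_on by blast
  hence "isCont \<phi> 0" using \<open>0 < r\<close> continuous_on_eq_continuous_at[of "ball 0 r" \<phi>] by simp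
  hence "(\<phi> \<longlongrightarrow> 0) (nhds 0)" using \<phi>(2) by (simp add: isCont_def tendsto_nhds_iff)
  hence "eventually (\<lambda>u. norm (sin (\<phi> u)) < sqrt \<rho> \<and> Re (cos (\<phi> u)) > 0) (nhds 0)"
    using w(1) by (intro eventually_sin_small_cos_pos) auto
  then obtain d where "0 < d" and d: "\<And>u. norm u < d \<Longrightarrow> sin (\<phi> u) \<in> T \<and> Re (cos (\<phi> u)) > 0"
    unfolding eventually_nhds_metric T_def by (auto simp: dist_norm)
  define \<delta> where "\<delta> = min d r"
  have \<delta>: "0 < \<delta>" "\<delta> \<le> r" "\<And>u. u \<in> ball 0 \<delta> \<Longrightarrow> sin (\<phi> u) \<in> T \<and> Re (cos (\<phi> u)) > 0"
    using \<open>0 < d\<close> \<open>0 < r\<close> d by (auto simp: \<delta>_def)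
  show ?thesis
  proof (rule that[OF \<delta>(1,2)])
    fix u :: complex assume u: "u \<in> ball 0 \<delta>"
    show "K * (sin (\<phi> u))^2 \<in> ball 0 \<rho>" using small(2) \<delta>(3)[OF u] by simp
    show "cos (\<phi> u) \<noteq> 0" using \<delta>(3)[OF u] by auto
    have "h (sin (\<phi> u)) * deriv (\<lambda>u. sin (\<phi> u)) u = 1"
    proof (rule linepath_integral_inverse_deriv[OF hol_h _ _ _ _ _ _ _ u])
      show "(\<lambda>u. sin (\<phi> u)) holomorphic_on ball 0 \<delta>"
        using \<phi>(1) \<delta>(2) by (intro holomorphic_intros) (auto intro: holomorphic_on_subset)
      show "contour_integral (linepath 0 (sin (\<phi> v))) h = v" if "v \<in> ball 0 \<delta>" for v
        using inverse[of v] that \<delta>(2) by (simp add: u_of_phi_def h_def K_def)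
    qed (use \<delta>(3) w(1) in \<open>auto simp: T_def\<close>)
    moreover have "deriv (\<lambda>u. sin (\<phi> u)) u = cos (\<phi> u) * deriv \<phi> u"
      using holomorphic_derivI[OF \<phi>(1), of u] u \<delta>(2)
      by (intro DERIV_imp_deriv) (auto intro!: derivative_eq_intros)
    moreover have "csqrt (1 - (sin (\<phi> u))^2) = cos (\<phi> u)"
      using csqrt_square[of "cos (\<phi> u)"] \<delta>(3)[OF u] by (simp add: cos_squared_eq)
    moreover have "cos (\<phi> u) \<noteq> 0" and "csqrt (1 - K * (sin (\<phi> u))^2) \<noteq> 0"
      using \<delta>(3)[OF u] slit(2)[of "sin (\<phi> u)"] by (auto simp: csqrt_eq_0)
    ultimately show "w (K * (sin (\<phi> u))^2) * deriv \<phi> u = csqrt (1 - K * (sin (\<phi> u))^2)"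
      using h_eq[of "sin (\<phi> u)"] \<delta>(3)[OF u] by (simp add: field_simps)
  qed
qed

definition chebyshev_root :: "complex \<Rightarrow> complex \<Rightarrow> complex \<Rightarrow> complex" where
  "chebyshev_root K s ds = (1 - 2 * K * s) * ds^2 / (16 * s * (1 - s) * (1 - K * s) - 3 * ds^2)"

lemma chebyshev_root_eq:
  fixes q s ds K :: complex
  assumes cubic: "4 * q^3 - 3 * q = 1 - 2 * K * s"
    and quad: "q^2 * ds^2 = 4 * s * (1 - s) * (1 - K * s)" and "4 * q^2 \<noteq> 3" "ds \<noteq> 0"
  shows "q = chebyshev_root K s ds"
proof -
  have "16 * s * (1 - s) * (1 - K * s) - 3 * ds^2 = 4 * (4 * s * (1 - s) * (1 - K * s)) - 3 * ds^2"
    by simp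
  also have "\<dots> = ds^2 * (4 * q^2 - 3)" unfolding quad[symmetric] by (simp add: algebra_simps)
  finally have "16 * s * (1 - s) * (1 - K * s) - 3 * ds^2 = ds^2 * (4 * q^2 - 3)" .
  moreover have "(1 - 2 * K * s) * ds^2 = q * (ds^2 * (4 * q^2 - 3))"
    unfolding cubic[symmetric] by (simp add: algebra_simps power2_eq_square power3_eq_cube)
  ultimately show ?thesis using assms(3,4) by (simp add: chebyshev_root_def)
qed

lemma chebyshev_root_ode:
  fixes q dq s ds K :: complex
  assumes cubic: "4 * q^3 - 3 * q = 1 - 2 * K * s" and deriv: "(3 - 12 * q^2) * dq = 2 * K * ds"
    and quad: "q^2 * ds^2 = 4 * s * (1 - s) * (1 - K * s)" and "4 * q^2 \<noteq> 1"
  shows "9 * q^2 * dq^2 = 2 * (1 - q^2) * (4 * q^3 - 3 * q + 2 * K - 1)"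
proof -
  have "(4 * q^2 - 1)^2 * (9 * q^2 * dq^2) = q^2 * ((3 - 12 * q^2) * dq)^2"
    by (simp add: algebra_simps power2_eq_square)
  also have "\<dots> = 4 * K^2 * (q^2 * ds^2)" unfolding deriv by (simp add: algebra_simps power2_eq_square)
  also have "\<dots> = 2 * (2 * K * s) * (2 - 2 * K * s) * (2 * K - 2 * K * s)"
    unfolding quad by (simp add: algebra_simps power2_eq_square)
  also have "\<dots> = 2 * ((1 - (4 * q^3 - 3 * q)) * (1 + (4 * q^3 - 3 * q))) * (4 * q^3 - 3 * q + 2 * K - 1)"
    unfolding cubic by (simp add: algebra_simps)
  also have "\<dots> = (4 * q^2 - 1)^2 * (2 * (1 - q^2) * (4 * q^3 - 3 * q + 2 * K - 1))"
    by (simp add: algebra_simps power2_eq_square power3_eq_cube)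
  finally show ?thesis using assms(4) by simp
qed

lemma sin_sq_deriv_quadratic:
  fixes x dx q K :: complex
  assumes "q * dx = csqrt (1 - K * (sin x)^2)"
  shows "q^2 * (2 * sin x * cos x * dx)^2 = 4 * (sin x)^2 * (1 - (sin x)^2) * (1 - K * (sin x)^2)"
proof -
  have "q^2 * (2 * sin x * cos x * dx)^2 = 4 * (sin x)^2 * (cos x)^2 * (q * dx)^2"
    by (simp add: algebra_simps power2_eq_square)
  thus ?thesis unfolding assms by (simp add: cos_squared_eq)
qed

lemma sin_sq_phi_chebyshev_root:
  fixes \<kappa> r :: real and \<phi> :: "complex \<Rightarrow> complex"
  assumes \<kappa>: "0 < \<kappa>" "\<kappa> < 1" and "0 < r" and \<phi>: "\<phi> holomorphic_on ball 0 r" "\<phi> 0 = 0"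
    and inverse: "\<And>u. u \<in> ball 0 r \<Longrightarrow> u_of_phi \<kappa> (\<phi> u) = u"
    and K: "K = (complex_of_real \<kappa>)^2" and S: "S = (\<lambda>u. (sin (\<phi> u))^2)"
  obtains \<delta> q where "0 < \<delta>" "q holomorphic_on ball 0 \<delta>" "q 0 = 1"
    "\<And>u. u \<in> ball 0 \<delta> \<Longrightarrow> q u = 1 \<Longrightarrow> u = 0"
    "\<And>u. u \<in> ball 0 \<delta> \<Longrightarrow> u \<noteq> 0 \<Longrightarrow> q u = chebyshev_root K (S u) (deriv S u)"
    "\<And>u. u \<in> ball 0 \<delta> \<Longrightarrow>
      9 * (q u)^2 * (deriv q u)^2 = 2 * (1 - (q u)^2) * (4 * (q u)^3 - 3 * q u + 2 * K - 1)"
proof -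
  obtain \<rho> w where w: "0 < \<rho>" "\<rho> \<le> 1/2" "w holomorphic_on ball 0 \<rho>" "w 0 = 1"
    "\<And>y. y \<in> ball 0 \<rho> \<Longrightarrow> 4 * (w y)^3 - 3 * w y = 1 - 2 * y"
    "\<And>y. y \<in> ball 0 \<rho> \<Longrightarrow> w y \<in> ball 1 (1/10)"
    "\<And>y. y \<in> ball 0 \<rho> \<Longrightarrow> (w has_field_derivative 2 / (3 - 12 * (w y)^2)) (at y)"
    "\<And>y. y \<in> ball 0 \<rho> \<Longrightarrow> gauss_F (1/6) (5/6) (1/2) y = w y / csqrt (1 - y)"
    by (rule gauss_F_sixth_closed_form) blast
  obtain \<delta> where \<delta>: "0 < \<delta>" "\<delta> \<le> r"
    and KS: "\<And>u. u \<in> ball 0 \<delta> \<Longrightarrow> K * S u \<in> ball 0 \<rho>"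
    and cos: "\<And>u. u \<in> ball 0 \<delta> \<Longrightarrow> cos (\<phi> u) \<noteq> 0"
    and w_deriv: "\<And>u. u \<in> ball 0 \<delta> \<Longrightarrow> w (K * S u) * deriv \<phi> u = csqrt (1 - K * S u)"
    using u_of_phi_derivative_identity[OF \<kappa> \<open>0 < r\<close> \<phi> inverse w(1-3,8)]
    unfolding K S by blast
  define q where "q = (\<lambda>u. w (K * S u))"
  have hol_S: "S holomorphic_on ball 0 \<delta>"
    unfolding S using \<phi>(1) \<delta>(2) by (intro holomorphic_intros) (auto intro: holomorphic_on_subset)
  have dS: "(S has_field_derivative 2 * sin (\<phi> u) * cos (\<phi> u) * deriv \<phi> u) (at u)"
    if "u \<in> ball 0 \<delta>" for u
    unfolding S using holomorphic_derivI[OF \<phi>(1), of u] that \<delta>(2)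
    by (auto intro!: derivative_eq_intros simp: algebra_simps)
  have sin: "sin (\<phi> u) \<noteq> 0" if "u \<in> ball 0 \<delta>" "u \<noteq> 0" for u
  proof
    assume "sin (\<phi> u) = 0"
    hence "u_of_phi \<kappa> (\<phi> u) = 0" by (simp add: u_of_phi_def)
    thus False using inverse[of u] that \<delta>(2) by auto
  qed
  show ?thesis
  proof
    show "q holomorphic_on ball 0 \<delta>"
      unfolding q_def using KS hol_S
      by (intro holomorphic_on_compose_gen[OF _ w(3), unfolded o_def] holomorphic_intros) auto
    show "q 0 = 1" using w(4) \<phi>(2) by (simp add: q_def S)
  next
    fix u :: complex assume u: "u \<in> ball 0 \<delta>"
    have cubic: "4 * (q u)^3 - 3 * q u = 1 - 2 * K * S u" using w(5)[OF KS[OF u]] by (simp add: q_def)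
    have near_1: "4 * (q u)^2 \<noteq> 1" "4 * (q u)^2 \<noteq> 3"
      using near_one_four_square_ne[OF w(6)[OF KS[OF u]]] by (simp_all add: q_def)
    have quad: "(q u)^2 * (deriv S u)^2 = 4 * S u * (1 - S u) * (1 - K * S u)"
      using sin_sq_deriv_quadratic[OF w_deriv[OF u, unfolded S]] DERIV_imp_deriv[OF dS[OF u]]
      by (simp add: q_def S)
    show "q u = 1 \<Longrightarrow> u = 0" using cubic sin[OF u] \<kappa>(1) by (auto simp: K S)
    show "q u = chebyshev_root K (S u) (deriv S u)" if "u \<noteq> 0"
    proof (rule chebyshev_root_eq[OF cubic quad near_1(2)])
      have "q u * deriv \<phi> u \<noteq> 0"
        using w_deriv[OF u] one_minus_notin_nonpos_Reals[of "K * S u"] KS[OF u] w(2)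
        by (auto simp: q_def csqrt_eq_0)
      thus "deriv S u \<noteq> 0" using DERIV_imp_deriv[OF dS[OF u]] sin[OF u that] cos[OF u] by auto
    qed
    have "((\<lambda>u. K * S u) has_field_derivative K * deriv S u) (at u)"
      using dS[OF u] DERIV_imp_deriv[OF dS[OF u]] by (auto intro!: derivative_eq_intros)
    hence "(q has_field_derivative 2 / (3 - 12 * (q u)^2) * (K * deriv S u)) (at u)"
      unfolding q_def by (rule DERIV_chain2[where g = "\<lambda>u. K * S u", OF w(7)[OF KS[OF u]]])
    hence "(3 - 12 * (q u)^2) * deriv q u = 2 * K * deriv S u"
      using near_1(1) by (simp add: DERIV_imp_deriv field_simps)
    thus "9 * (q u)^2 * (deriv q u)^2 = 2 * (1 - (q u)^2) * (4 * (q u)^3 - 3 * q u + 2 * K - 1)"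
      using chebyshev_root_ode[OF cubic _ quad near_1(1)] by blast
  qed (use \<delta> in auto)
qed

lemma remove_sings_eq_holomorphic_on:
  assumes "g holomorphic_on U" "open U" "u \<in> U" and "\<And>z. z \<in> U \<Longrightarrow> z \<noteq> a \<Longrightarrow> f z = g z"
  shows "remove_sings f u = g u"
proof (rule remove_sings_eqI)
  have "g \<midarrow>u\<rightarrow> g u"
    using assms(1-3) by (meson holomorphic_on_imp_continuous_on continuous_on_eq_continuous_at isContD)
  moreover have "eventually (\<lambda>z. g z = f z) (at u)"
    using eventually_at_in_open'[OF assms(2,3)] eventually_neq_at_within[of a u UNIV]
    by eventually_elim (use assms(4) in auto)
  ultimately show "f \<midarrow>u\<rightarrow> g u" by (rule Lim_transform_eventually)
qed

lemma elliptic_extension_chebyshev_root: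
  fixes f S q :: "complex \<Rightarrow> complex" and K :: complex
  assumes "elliptic f" and S: "S holomorphic_on ball 0 \<epsilon>" "\<And>u. u \<in> ball 0 \<epsilon> \<Longrightarrow> f u = S u"
    and q: "q holomorphic_on ball 0 \<delta>"
      "\<And>u. u \<in> ball 0 \<delta> \<Longrightarrow> u \<noteq> 0 \<Longrightarrow> q u = chebyshev_root K (S u) (deriv S u)"
  obtains Q \<omega>1 \<omega>2 where "Q nicely_meromorphic_on UNIV" "\<omega>1 \<noteq> 0" "Im (\<omega>2 / \<omega>1) \<noteq> 0"
    "\<And>z. Q (z + \<omega>1) = Q z" "\<And>z. Q (z + \<omega>2) = Q z"
    "\<And>u. u \<in> ball 0 (min \<delta> \<epsilon>) \<Longrightarrow> Q u = q u"
proof -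
  from \<open>elliptic f\<close> obtain \<omega>1 \<omega>2 where "f meromorphic_on UNIV"
    and lattice: "\<omega>1 \<noteq> 0" "Im (\<omega>2 / \<omega>1) \<noteq> 0"
    and periodic: "\<And>z. f (z + \<omega>1) = f z" "\<And>z. f (z + \<omega>2) = f z"
    unfolding elliptic_def by blast
  define G where "G = remove_sings f"
  define Q where "Q = remove_sings (\<lambda>z. chebyshev_root K (G z) (deriv G z))"
  have G_S: "G u = S u" if "u \<in> ball 0 \<epsilon>" for u
    unfolding G_def using S that by (intro remove_sings_eq_holomorphic_on[of _ _ _ 0]) auto
  have G_deriv: "deriv G u = deriv S u" if "u \<in> ball 0 \<epsilon>" for u
  proof (rule deriv_cong_ev)
    show "eventually (\<lambda>z. G z = S z) (nhds u)"
      using eventually_nhds_in_open[OF open_ball that] by eventually_elim (simp add: G_S)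
  qed simp
  show ?thesis
  proof (rule that[OF _ lattice])
    show "Q nicely_meromorphic_on UNIV"
      unfolding Q_def G_def chebyshev_root_def using \<open>f meromorphic_on UNIV\<close>
      by (intro remove_sings_nicely_meromorphic meromorphic_intros)
    show "Q (z + \<omega>1) = Q z" "Q (z + \<omega>2) = Q z" for z
      unfolding Q_def G_def by (simp_all add: remove_sings_periodic deriv_periodic periodic)
    show "Q u = q u" if "u \<in> ball 0 (min \<delta> \<epsilon>)" for u
      unfolding Q_def
    proof (rule remove_sings_eq_holomorphic_on[of q "ball 0 (min \<delta> \<epsilon>)" u 0])
      show "q holomorphic_on ball 0 (min \<delta> \<epsilon>)" using q(1) by (rule holomorphic_on_subset) auto
      show "chebyshev_root K (G z) (deriv G z) = q z" if "z \<in> ball 0 (min \<delta> \<epsilon>)" "z \<noteq> 0" for z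
        using that q(2)[of z] G_S[of z] G_deriv[of z] by simp
    qed (use that in auto)
  qed
qed

lemma sin_sq_phi_not_elliptic:
  fixes \<kappa> r \<epsilon> :: real and \<phi> f :: "complex \<Rightarrow> complex"
  assumes \<kappa>: "0 < \<kappa>" "\<kappa> < 1" and "0 < r" and \<phi>: "\<phi> holomorphic_on ball 0 r" "\<phi> 0 = 0"
    and inverse: "\<And>u. u \<in> ball 0 r \<Longrightarrow> u_of_phi \<kappa> (\<phi> u) = u"
    and "elliptic f" "0 < \<epsilon>" "\<epsilon> \<le> r" and f: "\<And>u. u \<in> ball 0 \<epsilon> \<Longrightarrow> f u = (sin (\<phi> u))^2"
  shows False
proof -
  define K where "K = (complex_of_real \<kappa>)^2"
  define S where "S = (\<lambda>u. (sin (\<phi> u))^2)"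
  obtain \<delta> q where "0 < \<delta>" and hol_q: "q holomorphic_on ball 0 \<delta>" and "q 0 = 1"
    and q_1: "\<And>u. u \<in> ball 0 \<delta> \<Longrightarrow> q u = 1 \<Longrightarrow> u = 0"
    and q_root: "\<And>u. u \<in> ball 0 \<delta> \<Longrightarrow> u \<noteq> 0 \<Longrightarrow> q u = chebyshev_root K (S u) (deriv S u)"
    and q_ode: "\<And>u. u \<in> ball 0 \<delta> \<Longrightarrow>
      9 * (q u)^2 * (deriv q u)^2 = 2 * (1 - (q u)^2) * (4 * (q u)^3 - 3 * q u + 2 * K - 1)"
    using sin_sq_phi_chebyshev_root[OF \<kappa> \<open>0 < r\<close> \<phi> _ K_def S_def] inverse by blast
  have "S holomorphic_on ball 0 \<epsilon>"
    unfolding S_def using \<phi>(1) \<open>\<epsilon> \<le> r\<close> by (intro holomorphic_intros) (auto intro: holomorphic_on_subset)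
  then obtain Q \<omega>1 \<omega>2 where Q: "Q nicely_meromorphic_on UNIV" "\<omega>1 \<noteq> 0" "Im (\<omega>2 / \<omega>1) \<noteq> 0"
      "\<And>z. Q (z + \<omega>1) = Q z" "\<And>z. Q (z + \<omega>2) = Q z"
    and Q_q: "\<And>u. u \<in> ball 0 (min \<delta> \<epsilon>) \<Longrightarrow> Q u = q u"
    using elliptic_extension_chebyshev_root[OF \<open>elliptic f\<close> _ _ hol_q q_root] f
    unfolding S_def by blast
  define U where "U = ball (0::complex) (min \<delta> \<epsilon>)"
  have hol_qU: "q holomorphic_on U" using hol_q by (rule holomorphic_on_subset) (auto simp: U_def)
  hence hol_Q: "Q holomorphic_on U" by (rule holomorphic_transform) (simp add: U_def Q_q)
  have "Q constant_on U"
  proof (rule doubly_periodic_ode_solution_constant[OF Q, where a = 0])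
    show "9 * (Q u)^2 * (deriv Q u)^2 = 2 * (1 - (Q u)^2) * (4 * (Q u)^3 - 3 * Q u + 2 * K - 1)"
      if "u \<in> U" for u
    proof -
      have "deriv Q u = deriv q u"
        using complex_derivative_transform_within_open[OF hol_Q hol_qU _ that] Q_q
        by (simp add: U_def)
      thus ?thesis using q_ode[of u] Q_q[of u] that by (simp add: U_def)
    qed
  qed (use \<open>0 < \<delta>\<close> \<open>0 < \<epsilon>\<close> hol_Q in \<open>auto simp: U_def\<close>)
  moreover define u0 where "u0 = complex_of_real (min \<delta> \<epsilon> / 2)"
  moreover have "0 \<in> U" "u0 \<in> U" "u0 \<in> ball 0 \<delta>" "u0 \<noteq> 0"
    using \<open>0 < \<delta>\<close> \<open>0 < \<epsilon>\<close> by (auto simp: U_def u0_def)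
  ultimately have "q u0 = q 0" by (metis Q_q U_def constant_on_def)
  thus False using q_1[of u0] \<open>q 0 = 1\<close> \<open>u0 \<in> ball 0 \<delta>\<close> \<open>u0 \<noteq> 0\<close> by simp
qed

lemma elliptic_affine:
  assumes "elliptic f"
  shows "elliptic (\<lambda>z. a * f z + b)"
  using assms unfolding elliptic_def by (auto intro!: meromorphic_intros)

theorem theorem11:
  fixes \<kappa> r :: real and \<phi> \<psi> :: "complex \<Rightarrow> complex"
  assumes "0 < \<kappa>" and "\<kappa> < 1"
    and "0 < r"
    and "\<phi> holomorphic_on ball 0 r" and "\<phi> 0 = 0"
    and "\<And>u. u \<in> ball 0 r \<Longrightarrow> u_of_phi \<kappa> (\<phi> u) = u"
    and "\<psi> holomorphic_on ball 0 r" and "\<psi> 0 = 0"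
    and "\<And>u. u \<in> ball 0 r \<Longrightarrow> sin (\<psi> u) = complex_of_real \<kappa> * sin (\<phi> u)"
  shows "\<not> (\<exists>f \<epsilon>. elliptic f \<and> 0 < \<epsilon> \<and> \<epsilon> \<le> r \<and> (\<forall>u\<in>ball 0 \<epsilon>. f u = (sin (\<phi> u))\<^sup>2)) \<and>
         \<not> (\<exists>f \<epsilon>. elliptic f \<and> 0 < \<epsilon> \<and> \<epsilon> \<le> r \<and> (\<forall>u\<in>ball 0 \<epsilon>. f u = (cos (\<phi> u))\<^sup>2)) \<and>
         \<not> (\<exists>f \<epsilon>. elliptic f \<and> 0 < \<epsilon> \<and> \<epsilon> \<le> r \<and> (\<forall>u\<in>ball 0 \<epsilon>. f u = (cos (\<psi> u))\<^sup>2))"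
proof -
  have no_affine_image: False
    if "elliptic f" "0 < \<epsilon>" "\<epsilon> \<le> r" "a \<noteq> 0"
      and f: "\<And>u. u \<in> ball 0 \<epsilon> \<Longrightarrow> f u = a * (sin (\<phi> u))\<^sup>2 + b" for f \<epsilon> a b
  proof (rule sin_sq_phi_not_elliptic[OF assms(1-6)])
    show "elliptic (\<lambda>z. (1 / a) * f z + (- b / a))" using that(1) by (rule elliptic_affine)
    show "(1 / a) * f u + (- b / a) = (sin (\<phi> u))\<^sup>2" if "u \<in> ball 0 \<epsilon>" for u
      using f[OF that] \<open>a \<noteq> 0\<close> by (simp add: field_simps)
  qed (use that in auto)
  show ?thesis
  proof (intro conjI notI; elim exE conjE)
    fix f \<epsilon> assume "elliptic f" "0 < \<epsilon>" "\<epsilon> \<le> r" "\<forall>u\<in>ball 0 \<epsilon>. f u = (sin (\<phi> u))\<^sup>2"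
    thus False using no_affine_image[of f \<epsilon> 1 0] by simp
  next
    fix f \<epsilon> assume "elliptic f" "0 < \<epsilon>" "\<epsilon> \<le> r" "\<forall>u\<in>ball 0 \<epsilon>. f u = (cos (\<phi> u))\<^sup>2"
    thus False using no_affine_image[of f \<epsilon> "-1" 1] by (simp add: cos_squared_eq)
  next
    fix f \<epsilon> assume f: "elliptic f" "0 < \<epsilon>" "\<epsilon> \<le> r" "\<forall>u\<in>ball 0 \<epsilon>. f u = (cos (\<psi> u))\<^sup>2"
    have "f u = - (complex_of_real \<kappa>)\<^sup>2 * (sin (\<phi> u))\<^sup>2 + 1" if "u \<in> ball 0 \<epsilon>" for u
      using f(3,4) assms(9)[of u] that by (auto simp: cos_squared_eq power_mult_distrib)
    thus False using no_affine_image[OF f(1-3), of "- (complex_of_real \<kappa>)\<^sup>2" 1] assms(1) by simp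
  qed
qed

end
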